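(* Let $1\le i,j,k,l\le n$ with $i<j$, $k<l$, $i\le k$. Then in ${\boldsymbol U}_{v}(\mathfrak q_n)$: \[ \mathsf E_{j,i}\mathsf E_{k,l}=\begin{cases}\mathsf E_{k,l}\mathsf E_{j,i} & (i<j\le k<l\text{ or } i<k<l<j),\\ \mathsf E_{k,l}\mathsf E_{j,i}-\mathsf E_{j,l}\mathsf K_j\mathsf K_i^{-1} & (i=k<j<l),\\ \mathsf E_{k,l}\mathsf E_{j,i}+\mathsf E_{k,i}\mathsf K_j\mathsf K_k^{-1} & (i<k<j=l),\\ \mathsf E_{k,l}\mathsf E_{j,i}-(v-v^{-1})\mathsf E_{k,i}\mathsf E_{j,l}\mathsf K_j\mathsf K_k^{-1} & (i<k<j<l),\\ \mathsf E_{k,l}\mathsf E_{j,i}+\dfrac{\mathsf K_j\mathsf K_i^{-1}-\mathsf K_i\mathsf K_j^{-1}}{v-v^{-1}} & (i=k\text{ and } j=l).\end{cases} \]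
   Context: Let $v$ be an indeterminate. The quantum queer superalgebra ${\boldsymbol U}_{v}(\mathfrak q_n)$ is the associative superalgebra over $\mathbb Q(v)$ generated by even generators $\mathsf K_i,\mathsf K_i^{-1}$ ($1\le i\le n$), $\mathsf E_j,\mathsf F_j$ ($1\le j\le n-1$) and odd generators $\mathsf K_{\bar i}$ ($1\le i\le n$), $\mathsf E_{\bar j},\mathsf F_{\bar j}$ ($1\le j\le n-1$), subject to the following relations (indices are taken only where they make sense), where $(\epsilon_i,\alpha_j)=\delta_{i,j}-\delta_{i,j+1}$: (QQ1) $\mathsf K_i\mathsf K_i^{-1}=\mathsf K_i^{-1}\mathsf K_i=1$, $\mathsf K_i\mathsf K_j=\mathsf K_j\mathsf K_i$, $\mathsf K_i\mathsf K_{\bar j}=\mathsf K_{\bar j}\mathsf K_i$, $\mathsf K_{\bar i}\mathsf K_{\bar j}+\mathsf K_{\bar j}\mathsf K_{\bar i}=2\delta_{i,j}\frac{\mathsf K_i^2-\mathsf K_i^{-2}}{v^2-v^{-2}}$. (QQ2) $\mathsf K_i\mathsf E_j=v^{(\epsilon_i,\alpha_j)}\mathsf E_j\mathsf K_i$, $\mathsf K_i\mathsf E_{\bar j}=v^{(\epsilon_i,\alpha_j)}\mathsf E_{\bar j}\mathsf K_i$, $\mathsf K_i\mathsf F_j=v^{-(\epsilon_i,\alpha_j)}\mathsf F_j\mathsf K_i$, $\mathsf K_i\mathsf F_{\bar j}=v^{-(\epsilon_i,\alpha_j)}\mathsf F_{\bar j}\mathsf K_i$. (QQ3) $\mathsf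 K_{\bar i}\mathsf E_i-v\mathsf E_i\mathsf K_{\bar i}=\mathsf E_{\bar i}\mathsf K_i^{-1}$, $v\mathsf K_{\bar i}\mathsf E_{i-1}-\mathsf E_{i-1}\mathsf K_{\bar i}=-\mathsf K_i^{-1}\mathsf E_{\overline{i-1}}$, $\mathsf K_{\bar i}\mathsf F_i-v\mathsf F_i\mathsf K_{\bar i}=-\mathsf F_{\bar i}\mathsf K_i$, $v\mathsf K_{\bar i}\mathsf F_{i-1}-\mathsf F_{i-1}\mathsf K_{\bar i}=\mathsf K_i\mathsf F_{\overline{i-1}}$, $\mathsf K_{\bar i}\mathsf E_{\bar i}+v\mathsf E_{\bar i}\mathsf K_{\bar i}=\mathsf E_i\mathsf K_i^{-1}$, $v\mathsf K_{\bar i}\mathsf E_{\overline{i-1}}+\mathsf E_{\overline{i-1}}\mathsf K_{\bar i}=\mathsf K_i^{-1}\mathsf E_{i-1}$, $\mathsf K_{\bar i}\mathsf F_{\bar i}+v\mathsf F_{\bar i}\mathsf K_{\bar i}=\mathsf F_i\mathsf K_i$, $v\mathsf K_{\bar i}\mathsf F_{\overline{i-1}}+\mathsf F_{\overline{i-1}}\mathsf K_{\bar i}=\mathsf K_i\mathsf F_{i-1}$, and for $j\ne i,i-1$: $\mathsf K_{\bar i}\mathsf E_j=\mathsf E_j\mathsf K_{\bar i}$, $\mathsf K_{\bar i}\mathsf F_j=\mathsf F_j\mathsf K_{\bar i}$, $\mathsf K_{\bar i}\mathsf E_{\bar j}=-\mathsf E_{\bar j}\mathsf K_{\bar i}$,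 $\mathsf K_{\bar i}\mathsf F_{\bar j}=-\mathsf F_{\bar j}\mathsf K_{\bar i}$. (QQ4) $\mathsf E_i\mathsf F_j-\mathsf F_j\mathsf E_i=\delta_{i,j}\frac{\mathsf K_i\mathsf K_{i+1}^{-1}-\mathsf K_i^{-1}\mathsf K_{i+1}}{v-v^{-1}}$, $\mathsf E_{\bar i}\mathsf F_{\bar j}+\mathsf F_{\bar j}\mathsf E_{\bar i}=\delta_{i,j}\big(\frac{\mathsf K_i\mathsf K_{i+1}-\mathsf K_i^{-1}\mathsf K_{i+1}^{-1}}{v-v^{-1}}+(v-v^{-1})\mathsf K_{\bar i}\mathsf K_{\overline{i+1}}\big)$, $\mathsf E_i\mathsf F_{\bar j}-\mathsf F_{\bar j}\mathsf E_i=\delta_{i,j}(\mathsf K_{i+1}^{-1}\mathsf K_{\bar i}-\mathsf K_{\overline{i+1}}\mathsf K_i^{-1})$, $\mathsf E_{\bar i}\mathsf F_j-\mathsf F_j\mathsf E_{\bar i}=\delta_{i,j}(\mathsf K_{i+1}\mathsf K_{\bar i}-\mathsf K_{\overline{i+1}}\mathsf K_i)$. (QQ5) $\mathsf E_{\bar i}^2=-\frac{v-v^{-1}}{v+v^{-1}}\mathsf E_i^2$, $\mathsf F_{\bar i}^2=\frac{v-v^{-1}}{v+v^{-1}}\mathsf F_i^2$; for $|i-j|\ne1$: $\mathsf E_i\mathsf E_{\bar j}=\mathsf E_{\bar j}\mathsf E_i$, $\mathsf F_i\mathsf F_{\bar j}=\mathsf F_{\bar j}\mathsf F_i$; for $|i-j|>1$: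 $\mathsf E_i\mathsf E_j=\mathsf E_j\mathsf E_i$, $\mathsf F_i\mathsf F_j=\mathsf F_j\mathsf F_i$, $\mathsf E_{\bar i}\mathsf E_{\bar j}=-\mathsf E_{\bar j}\mathsf E_{\bar i}$, $\mathsf F_{\bar i}\mathsf F_{\bar j}=-\mathsf F_{\bar j}\mathsf F_{\bar i}$; $\mathsf E_i\mathsf E_{i+1}-v\mathsf E_{i+1}\mathsf E_i=\mathsf E_{\bar i}\mathsf E_{\overline{i+1}}+v\mathsf E_{\overline{i+1}}\mathsf E_{\bar i}$, $\mathsf E_i\mathsf E_{\overline{i+1}}-v\mathsf E_{\overline{i+1}}\mathsf E_i=\mathsf E_{\bar i}\mathsf E_{i+1}-v\mathsf E_{i+1}\mathsf E_{\bar i}$, $\mathsf F_i\mathsf F_{i+1}-v\mathsf F_{i+1}\mathsf F_i=-(\mathsf F_{\bar i}\mathsf F_{\overline{i+1}}+v\mathsf F_{\overline{i+1}}\mathsf F_{\bar i})$, $\mathsf F_i\mathsf F_{\overline{i+1}}-v\mathsf F_{\overline{i+1}}\mathsf F_i=\mathsf F_{\bar i}\mathsf F_{i+1}-v\mathsf F_{i+1}\mathsf F_{\bar i}$. (QQ6) for $|i-j|=1$: $\mathsf E_i^2X-(v+v^{-1})\mathsf E_iX\mathsf E_i+X\mathsf E_i^2=0$ for $X\in\{\mathsf E_j,\mathsf E_{\bar j}\}$ and $\mathsf F_i^2Y-(v+v^{-1})\mathsf F_iY\mathsf F_i+Y\mathsf F_i^2=0$ for $Y\in\{\mathsf F_j,\mathsf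 F_{\bar j}\}$. Quantum root vectors: for $1\le i\le n-1$ put $\mathsf E_{i,i+1}=\mathsf E_i$, $\overline{\mathsf E}_{i,i+1}=\mathsf E_{\bar i}$, $\mathsf E_{i+1,i}=\mathsf F_i$, $\overline{\mathsf E}_{i+1,i}=\mathsf F_{\bar i}$, and recursively for $i+1<j\le n$: $\mathsf E_{i,j}=-\mathsf E_{i,j-1}\mathsf E_{j-1}+v^{-1}\mathsf E_{j-1}\mathsf E_{i,j-1}$, $\overline{\mathsf E}_{i,j}=-\mathsf E_{i,j-1}\mathsf E_{\overline{j-1}}+v^{-1}\mathsf E_{\overline{j-1}}\mathsf E_{i,j-1}$, $\mathsf E_{j,i}=-\mathsf F_{j-1}\mathsf E_{j-1,i}+v\mathsf E_{j-1,i}\mathsf F_{j-1}$, $\overline{\mathsf E}_{j,i}=-\mathsf F_{\overline{j-1}}\mathsf E_{j-1,i}+v\mathsf E_{j-1,i}\mathsf F_{\overline{j-1}}$. *)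

theory Defs
  imports "HOL-Computational_Algebra.Polynomial" "HOL-Computational_Algebra.Fraction_Field"
begin

type_synonym Qv = "rat poly fract"

definition vv :: Qv where "vv = Fract [:0, 1:] 1"

definition Qv_algebra_hom :: "(Qv \<Rightarrow> 'a::ring_1) \<Rightarrow> bool" where
  "Qv_algebra_hom phi \<longleftrightarrow>
     phi 1 = 1 \<and> (\<forall>x y. phi (x + y) = phi x + phi y) \<and> (\<forall>x y. phi (x * y) = phi x * phi y)
     \<and> (\<forall>x a. phi x * a = a * phi x)"

text \<open>v^{(epsilon_i, alpha_j)} where (epsilon_i,alpha_j) = delta_{i,j} - delta_{i,j+1}.\<close>
definition vpair :: "nat \<Rightarrow> nat \<Rightarrow> Qv" where
  "vpair i j = (if i = j then vv else if i = j + 1 then inverse vv else 1)"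

text \<open>Elements K, Kinv, Kbar (indices 1..n), E, Ebar, F, Fbar (indices 1..n-1) of a Q(v)-algebra
  satisfying the defining relations (QQ1)-(QQ6) of U_v(q_n).\<close>
definition qq_rels ::
  "nat \<Rightarrow> (Qv \<Rightarrow> 'a::ring_1) \<Rightarrow> (nat \<Rightarrow> 'a) \<Rightarrow> (nat \<Rightarrow> 'a) \<Rightarrow> (nat \<Rightarrow> 'a)
    \<Rightarrow> (nat \<Rightarrow> 'a) \<Rightarrow> (nat \<Rightarrow> 'a) \<Rightarrow> (nat \<Rightarrow> 'a) \<Rightarrow> (nat \<Rightarrow> 'a) \<Rightarrow> bool" where
  "qq_rels n phi K Ki Kb E Eb F Fb \<longleftrightarrow>
   \<comment> \<open>QQ1\<close>
   (\<forall>i\<in>{1..n}. K i * Ki i = 1 \<and> Ki i * K i = 1) \<and>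
   (\<forall>i\<in>{1..n}. \<forall>j\<in>{1..n}. K i * K j = K j * K i \<and> K i * Kb j = Kb j * K i \<and>
      Kb i * Kb j + Kb j * Kb i =
        (if i = j then phi (2 / (vv^2 - inverse vv ^ 2)) * (K i ^ 2 - Ki i ^ 2) else 0)) \<and>
   \<comment> \<open>QQ2\<close>
   (\<forall>i\<in>{1..n}. \<forall>j\<in>{1..n-1}.
      K i * E j = phi (vpair i j) * E j * K i \<and> K i * Eb j = phi (vpair i j) * Eb j * K i \<and>
      K i * F j = phi (inverse (vpair i j)) * F j * K i \<and>
      K i * Fb j = phi (inverse (vpair i j)) * Fb j * K i) \<and>
   \<comment> \<open>QQ3\<close>
   (\<forall>i\<in>{1..n}.
      (i \<le> n - 1 \<longrightarrow>
         Kb i * E i - phi vv * E i * Kb i = Eb i * Ki i \<and>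
         Kb i * F i - phi vv * F i * Kb i = - (Fb i * K i) \<and>
         Kb i * Eb i + phi vv * Eb i * Kb i = E i * Ki i \<and>
         Kb i * Fb i + phi vv * Fb i * Kb i = F i * K i) \<and>
      (2 \<le> i \<longrightarrow>
         phi vv * Kb i * E (i - 1) - E (i - 1) * Kb i = - (Ki i * Eb (i - 1)) \<and>
         phi vv * Kb i * F (i - 1) - F (i - 1) * Kb i = K i * Fb (i - 1) \<and>
         phi vv * Kb i * Eb (i - 1) + Eb (i - 1) * Kb i = Ki i * E (i - 1) \<and>
         phi vv * Kb i * Fb (i - 1) + Fb (i - 1) * Kb i = K i * F (i - 1)) \<and>
      (\<forall>j\<in>{1..n-1}. j \<noteq> i \<and> j \<noteq> i - 1 \<longrightarrow>
         Kb i * E j = E j * Kb i \<and> Kb i * F j = F j * Kb i \<and>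
         Kb i * Eb j = - (Eb j * Kb i) \<and> Kb i * Fb j = - (Fb j * Kb i))) \<and>
   \<comment> \<open>QQ4\<close>
   (\<forall>i\<in>{1..n-1}. \<forall>j\<in>{1..n-1}.
      E i * F j - F j * E i =
        (if i = j then phi (inverse (vv - inverse vv)) * (K i * Ki (i+1) - Ki i * K (i+1)) else 0) \<and>
      Eb i * Fb j + Fb j * Eb i =
        (if i = j then phi (inverse (vv - inverse vv)) * (K i * K (i+1) - Ki i * Ki (i+1))
                       + phi (vv - inverse vv) * Kb i * Kb (i+1) else 0) \<and>
      E i * Fb j - Fb j * E i = (if i = j then Ki (i+1) * Kb i - Kb (i+1) * Ki i else 0) \<and>
      Eb i * F j - F j * Eb i = (if i = j then K (i+1) * Kb i - Kb (i+1) * K i else 0)) \<and>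
   \<comment> \<open>QQ5\<close>
   (\<forall>i\<in>{1..n-1}.
      Eb i ^ 2 = - (phi ((vv - inverse vv) / (vv + inverse vv)) * E i ^ 2) \<and>
      Fb i ^ 2 = phi ((vv - inverse vv) / (vv + inverse vv)) * F i ^ 2) \<and>
   (\<forall>i\<in>{1..n-1}. \<forall>j\<in>{1..n-1}.
      (\<not> (i = j + 1 \<or> j = i + 1) \<longrightarrow> E i * Eb j = Eb j * E i \<and> F i * Fb j = Fb j * F i) \<and>
      (i + 1 < j \<or> j + 1 < i \<longrightarrow>
         E i * E j = E j * E i \<and> F i * F j = F j * F i \<and>
         Eb i * Eb j = - (Eb j * Eb i) \<and> Fb i * Fb j = - (Fb j * Fb i))) \<and>
   (\<forall>i. 1 \<le> i \<and> i + 1 \<le> n - 1 \<longrightarrow>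
      E i * E (i+1) - phi vv * E (i+1) * E i = Eb i * Eb (i+1) + phi vv * Eb (i+1) * Eb i \<and>
      E i * Eb (i+1) - phi vv * Eb (i+1) * E i = Eb i * E (i+1) - phi vv * E (i+1) * Eb i \<and>
      F i * F (i+1) - phi vv * F (i+1) * F i = - (Fb i * Fb (i+1) + phi vv * Fb (i+1) * Fb i) \<and>
      F i * Fb (i+1) - phi vv * Fb (i+1) * F i = Fb i * F (i+1) - phi vv * F (i+1) * Fb i) \<and>
   \<comment> \<open>QQ6\<close>
   (\<forall>i\<in>{1..n-1}. \<forall>j\<in>{1..n-1}. (i = j + 1 \<or> j = i + 1) \<longrightarrow>
      (\<forall>X\<in>{E j, Eb j}. E i ^ 2 * X - phi (vv + inverse vv) * E i * X * E i + X * E i ^ 2 = 0) \<and>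
      (\<forall>Y\<in>{F j, Fb j}. F i ^ 2 * Y - phi (vv + inverse vv) * F i * Y * F i + Y * F i ^ 2 = 0))"

text \<open>Quantum root vectors. Eup phi E i d = E_{i,i+1+d}; Elow phi F i d = E_{i+1+d,i}.\<close>
primrec Eup :: "(Qv \<Rightarrow> 'a::ring_1) \<Rightarrow> (nat \<Rightarrow> 'a) \<Rightarrow> nat \<Rightarrow> nat \<Rightarrow> 'a" where
  "Eup phi E i 0 = E i"
| "Eup phi E i (Suc d) = - (Eup phi E i d * E (i + 1 + d)) + phi (inverse vv) * E (i + 1 + d) * Eup phi E i d"

primrec Elow :: "(Qv \<Rightarrow> 'a::ring_1) \<Rightarrow> (nat \<Rightarrow> 'a) \<Rightarrow> nat \<Rightarrow> nat \<Rightarrow> 'a" where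
  "Elow phi F i 0 = F i"
| "Elow phi F i (Suc d) = - (F (i + 1 + d) * Elow phi F i d) + phi vv * Elow phi F i d * F (i + 1 + d)"

text \<open>Eroot a b = E_{a,b} for a \<noteq> b.\<close>
definition Eroot :: "(Qv \<Rightarrow> 'a::ring_1) \<Rightarrow> (nat \<Rightarrow> 'a) \<Rightarrow> (nat \<Rightarrow> 'a) \<Rightarrow> nat \<Rightarrow> nat \<Rightarrow> 'a" where
  "Eroot phi E F a b = (if a < b then Eup phi E a (b - a - 1) else Elow phi F b (a - b - 1))"

end

theory Submission
  imports Defs
begin

(* The root vectors are iterated q-brackets, E_{k,l+1} = v^{-1} E_l E_{k,l} - E_{k,l} E_l and
   E_{j+1,i} = v E_{j,i} F_j - F_j E_{j,i}.  Since commutation with a fixed X is a derivation, the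
   commutator of such a q-bracket with X is assembled from the commutators of its two factors
   with X, and the resulting terms are reordered using that K_a E_{k,l} K_a^{-1} is a power of v
   times E_{k,l}.  Inducting on the length of the roots, everything reduces to the relations
   between the E_a and the F_b, through the two basic commutators
   [E_{k,l}, F_k] = E_{k+1,l} K_{k+1} K_k^{-1} and [E_{k,m+1}, F_m] = -v^{-1} E_{k,m} K_m K_{m+1}^{-1}.
   Only the even relations of U_v(q_n) are needed. *)

section \<open>Scalars and q-commutation\<close>

lemma commute_imp_left_commute: "A * B = B * A \<Longrightarrow> A * (B * t) = B * (A * t)"
  for A B t :: "'a::semigroup_mult"
  by (metis mult.assoc)

lemma vv_neq_0 [simp]: "vv \<noteq> 0"
  by (simp add: vv_def Zero_fract_def eq_fract)

lemma vv_neq_inverse_vv [simp]: "vv \<noteq> inverse vv"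
proof
  assume "vv = inverse vv"
  then have "vv * vv = 1" by (metis vv_neq_0 right_inverse)
  then show False by (simp add: vv_def eq_fract One_fract_def one_pCons)
qed

lemma inverse_vv_square_minus_1:
  "inverse (vv - inverse vv) * (inverse vv * inverse vv - 1) = - inverse vv"
proof -
  have "inverse vv * inverse vv - 1 = - inverse vv * (vv - inverse vv)"
    by (simp add: algebra_simps)
  then have "inverse (vv - inverse vv) * (inverse vv * inverse vv - 1)
      = - inverse vv * (inverse (vv - inverse vv) * (vv - inverse vv))"
    by (simp add: ac_simps)
  then show ?thesis by simp
qed

locale Qv_algebra =
  fixes phi :: "Qv \<Rightarrow> 'a::ring_1"
  assumes hom: "Qv_algebra_hom phi"
begin

lemma phi_1 [simp]: "phi 1 = 1"
  and phi_add: "phi (x + y) = phi x + phi y"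
  and phi_mult: "phi (x * y) = phi x * phi y"
  and phi_commute: "phi x * a = a * phi x"
  using hom unfolding Qv_algebra_hom_def by blast+

lemma phi_uminus: "phi (- x) = - phi x"
  using phi_add[of x "- x"] phi_add[of 0 0] by (simp add: add_eq_0_iff2)

lemma phi_diff: "phi (x - y) = phi x - phi y"
  using phi_add[of x "- y"] by (simp add: phi_uminus)

lemma phi_inverse_mult: "x \<noteq> 0 \<Longrightarrow> phi (inverse x) * phi x = 1"
  by (metis phi_mult phi_1 left_inverse)

lemma phi_mult_left: "phi x * (phi y * a) = phi (x * y) * a"
  by (simp add: phi_mult mult.assoc)

lemma phi_left_commute: "NO_MATCH (phi y) a \<Longrightarrow> a * (phi x * b) = phi x * (a * b)"
  by (metis mult.assoc phi_commute)

text \<open>\<open>scalar_simps\<close> normalizes to sums of terms \<open>\<plusminus>phi c * w\<close>, with \<open>c\<close> a monomial in \<open>Qv\<close>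
  and \<open>w\<close> a right-associated word in the algebra.\<close>
lemmas scalar_simps = algebra_simps phi_mult_left phi_left_commute
  phi_mult[symmetric] phi_add phi_diff phi_uminus

definition qcommute :: "Qv \<Rightarrow> 'a \<Rightarrow> 'a \<Rightarrow> bool" where
  "qcommute p A B \<longleftrightarrow> A * B = phi p * B * A"

lemma qcommute_1_iff: "qcommute 1 A B \<longleftrightarrow> A * B = B * A"
  by (simp add: qcommute_def)

lemma qcommuteD: "qcommute p A B \<Longrightarrow> A * B = phi p * (B * A)"
  by (simp add: qcommute_def mult.assoc)

lemma qcommuteD2: "qcommute p A B \<Longrightarrow> A * (B * t) = phi p * (B * (A * t))"
  by (metis qcommuteD mult.assoc)

lemma qcommute_mult_right:
  assumes "qcommute p A X" "qcommute q A Y"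
  shows "qcommute (p * q) A (X * Y)"
proof -
  have "A * (X * Y) = phi p * (X * (A * Y))"
    by (rule qcommuteD2[OF assms(1)])
  also have "\<dots> = phi (p * q) * (X * Y * A)"
    by (simp add: qcommuteD[OF assms(2)] phi_left_commute phi_mult_left mult.assoc)
  finally show ?thesis
    by (simp add: qcommute_def mult.assoc)
qed

lemma qcommute_qbracket_right:
  assumes "qcommute p A X" "qcommute q A Y"
  shows "qcommute (p * q) A (phi c * (Y * X) - X * Y)"
  using qcommute_mult_right[OF assms] qcommute_mult_right[OF assms(2,1)]
  by (simp add: qcommute_def algebra_simps phi_left_commute phi_mult_left mult.commute[of q])

lemma qcommute_mult_left:
  assumes "qcommute p A C" "qcommute q B C"
  shows "qcommute (p * q) (A * B) C"
proof -
  have "A * B * C = A * (phi q * (C * B))"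
    by (simp add: qcommuteD[OF assms(2)] mult.assoc)
  also have "\<dots> = phi (p * q) * (C * (A * B))"
    by (simp add: qcommuteD2[OF assms(1)] phi_left_commute phi_mult_left mult.commute[of q])
  finally show ?thesis
    by (simp add: qcommute_def mult.assoc)
qed

lemma qcommute_qbracket_left:
  assumes "qcommute p X B" "qcommute q Y B"
  shows "qcommute (p * q) (phi c * (Y * X) - X * Y) B"
  using qcommute_mult_left[OF assms] qcommute_mult_left[OF assms(2,1)]
  by (simp add: qcommute_def algebra_simps phi_left_commute phi_mult_left mult.commute[of q])

lemma commute_qbracket_right:
  "A * X = X * A \<Longrightarrow> A * Y = Y * A \<Longrightarrow> A * (phi c * (Y * X) - X * Y) = (phi c * (Y * X) - X * Y) * A"
  using qcommute_qbracket_right[of 1 A X 1 Y c] by (simp add: qcommute_1_iff)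

lemma commute_qbracket_left:
  "X * B = B * X \<Longrightarrow> Y * B = B * Y \<Longrightarrow> (phi c * (Y * X) - X * Y) * B = B * (phi c * (Y * X) - X * Y)"
  using qcommute_qbracket_left[of 1 X B 1 Y c] by (simp add: qcommute_1_iff)

lemma qcommute_inverse_left:
  assumes AB: "qcommute p A B" and inv: "A * A' = 1" "A' * A = 1" and "p \<noteq> 0"
  shows "qcommute (inverse p) A' B"
proof -
  have BA: "B * A = phi (inverse p) * (A * B)"
    using phi_inverse_mult[OF \<open>p \<noteq> 0\<close>] by (simp add: qcommuteD[OF AB] phi_mult_left flip: phi_mult)
  have "A' * B = A' * (B * A) * A'"
    by (simp add: mult.assoc inv)
  also have "\<dots> = phi (inverse p) * ((A' * A) * B * A')"
    by (simp add: BA phi_left_commute mult.assoc)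
  finally show ?thesis
    by (simp add: qcommute_def inv mult.assoc)
qed

lemma qbracket_commutator:
  "(phi c * (B * A) - A * B) * X - X * (phi c * (B * A) - A * B)
    = phi c * ((B * X - X * B) * A + B * (A * X - X * A)) - ((A * X - X * A) * B + A * (B * X - X * B))"
  by (simp add: scalar_simps)

end

section \<open>The even relations and the root vectors\<close>

locale quantum_gl_relations = Qv_algebra phi
  for phi :: "Qv \<Rightarrow> 'a::ring_1" +
  fixes n :: nat and K Ki E F :: "nat \<Rightarrow> 'a"
  assumes K_Ki: "1 \<le> a \<Longrightarrow> a \<le> n \<Longrightarrow> K a * Ki a = 1"
    and Ki_K: "1 \<le> a \<Longrightarrow> a \<le> n \<Longrightarrow> Ki a * K a = 1"
    and K_K: "1 \<le> a \<Longrightarrow> a \<le> n \<Longrightarrow> 1 \<le> b \<Longrightarrow> b \<le> n \<Longrightarrow> K a * K b = K b * K a"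
    and K_E: "1 \<le> a \<Longrightarrow> a \<le> n \<Longrightarrow> 1 \<le> b \<Longrightarrow> b < n \<Longrightarrow> K a * E b = phi (vpair a b) * E b * K a"
    and K_F: "1 \<le> a \<Longrightarrow> a \<le> n \<Longrightarrow> 1 \<le> b \<Longrightarrow> b < n \<Longrightarrow>
      K a * F b = phi (inverse (vpair a b)) * F b * K a"
    and E_F: "1 \<le> a \<Longrightarrow> a < n \<Longrightarrow> 1 \<le> b \<Longrightarrow> b < n \<Longrightarrow> a \<noteq> b \<Longrightarrow> E a * F b = F b * E a"
    and E_F_same: "1 \<le> a \<Longrightarrow> a < n \<Longrightarrow>
      E a * F a - F a * E a = phi (inverse (vv - inverse vv)) * (K a * Ki (a + 1) - Ki a * K (a + 1))"
    and E_E: "1 \<le> a \<Longrightarrow> a < n \<Longrightarrow> 1 \<le> b \<Longrightarrow> b < n \<Longrightarrow> a + 1 < b \<or> b + 1 < a \<Longrightarrow>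
      E a * E b = E b * E a"
    and F_F: "1 \<le> a \<Longrightarrow> a < n \<Longrightarrow> 1 \<le> b \<Longrightarrow> b < n \<Longrightarrow> a + 1 < b \<or> b + 1 < a \<Longrightarrow>
      F a * F b = F b * F a"

lemma qq_rels_quantum_gl_relations:
  assumes hom: "Qv_algebra_hom phi" and rels: "qq_rels n phi K Ki Kb E Eb F Fb"
  shows "quantum_gl_relations phi n K Ki E F"
proof -
  note R = rels[unfolded qq_rels_def ball_conj_distrib imp_conjR conj_assoc]
  have K_Ki: "\<forall>i\<in>{1..n}. K i * Ki i = 1" and Ki_K: "\<forall>i\<in>{1..n}. Ki i * K i = 1"
    and K_K: "\<forall>i\<in>{1..n}. \<forall>j\<in>{1..n}. K i * K j = K j * K i"
    and K_E: "\<forall>i\<in>{1..n}. \<forall>j\<in>{1..n-1}. K i * E j = phi (vpair i j) * E j * K i"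
    and K_F: "\<forall>i\<in>{1..n}. \<forall>j\<in>{1..n-1}. K i * F j = phi (inverse (vpair i j)) * F j * K i"
    and E_F: "\<forall>i\<in>{1..n-1}. \<forall>j\<in>{1..n-1}. E i * F j - F j * E i =
      (if i = j then phi (inverse (vv - inverse vv)) * (K i * Ki (i+1) - Ki i * K (i+1)) else 0)"
    and E_E: "\<forall>i\<in>{1..n-1}. \<forall>j\<in>{1..n-1}. i + 1 < j \<or> j + 1 < i \<longrightarrow> E i * E j = E j * E i"
    and F_F: "\<forall>i\<in>{1..n-1}. \<forall>j\<in>{1..n-1}. i + 1 < j \<or> j + 1 < i \<longrightarrow> F i * F j = F j * F i"
    using R by - (elim conjE, assumption)+
  show ?thesis
  proof (unfold_locales)
    show "Qv_algebra_hom phi" by (fact hom)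
  next
    fix a b assume "1 \<le> a" "a < n" "1 \<le> b" "b < n" "a \<noteq> b"
    with E_F have "E a * F b - F b * E a = 0" by auto
    then show "E a * F b = F b * E a" by simp
  qed (use K_Ki Ki_K K_K K_E K_F E_F E_E F_F in auto)
qed

text \<open>\<open>root_weight a k l\<close> is \<open>v\<^bsup>(\<epsilon>\<^sub>a, \<epsilon>\<^sub>k - \<epsilon>\<^sub>l)\<^esup>\<close>, the scalar by which conjugation with \<open>K a\<close>
  rescales \<open>E\<^sub>k\<^sub>,\<^sub>l\<close>.\<close>

definition root_weight :: "nat \<Rightarrow> nat \<Rightarrow> nat \<Rightarrow> Qv" where
  "root_weight a k l = (if a = k then vv else 1) * (if a = l then inverse vv else 1)"

lemma root_weight_mult: "root_weight a k l * root_weight a l m = root_weight a k m"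
  by (simp add: root_weight_def)

lemma root_weight_neq_0 [simp]: "root_weight a k l \<noteq> 0"
  by (simp add: root_weight_def)

lemma vpair_eq_root_weight: "vpair a b = root_weight a b (Suc b)"
  and inverse_vpair_eq_root_weight: "inverse (vpair a b) = root_weight a (Suc b) b"
  by (auto simp: vpair_def root_weight_def)

context quantum_gl_relations
begin

lemma Ki_K_commute: "1 \<le> a \<Longrightarrow> a \<le> n \<Longrightarrow> 1 \<le> b \<Longrightarrow> b \<le> n \<Longrightarrow> Ki a * K b = K b * Ki a"
  using qcommute_inverse_left[of 1 "K a" "K b" "Ki a"] by (simp add: qcommute_1_iff K_K K_Ki Ki_K)

lemma E_F_commutator: "1 \<le> a \<Longrightarrow> a < n \<Longrightarrow>
    E a * F a - F a * E a = phi (inverse (vv - inverse vv)) * (K a * Ki (Suc a) - K (Suc a) * Ki a)"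
  using E_F_same[of a] Ki_K_commute[of a "Suc a"] by simp

lemma Ki_Ki_commute: "1 \<le> a \<Longrightarrow> a \<le> n \<Longrightarrow> 1 \<le> b \<Longrightarrow> b \<le> n \<Longrightarrow> Ki a * Ki b = Ki b * Ki a"
  using qcommute_inverse_left[of 1 "K b" "Ki a" "Ki b"]
  by (simp add: qcommute_1_iff Ki_K_commute K_Ki Ki_K)

lemma Ki_K_cancel:
  assumes "1 \<le> b" "b \<le> n"
  shows "A * Ki b * (K b * C) = A * C"
proof -
  have "A * Ki b * (K b * C) = A * (Ki b * K b) * C"
    by (simp only: mult.assoc)
  with Ki_K[OF assms] show ?thesis
    by simp
qed

lemma K_Ki_mult_commute:
  assumes "1 \<le> a" "a \<le> n" "1 \<le> b" "b \<le> n" "1 \<le> c" "c \<le> n" "1 \<le> d" "d \<le> n"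
  shows "K a * Ki b * (K c * Ki d) = K c * Ki d * (K a * Ki b)"
proof -
  have "K a * Ki b * (K c * Ki d) = K a * (Ki b * K c) * Ki d"
    by (simp add: mult.assoc)
  also have "\<dots> = (K a * K c) * (Ki b * Ki d)"
    using Ki_K_commute[of b c] assms by (simp add: mult.assoc)
  also have "\<dots> = (K c * K a) * (Ki d * Ki b)"
    using K_K[of a c] Ki_Ki_commute[of b d] assms by simp
  also have "\<dots> = K c * (Ki d * K a) * Ki b"
    using Ki_K_commute[of d a] assms by (simp add: mult.assoc)
  finally show ?thesis
    by (simp add: mult.assoc)
qed

abbreviation Er :: "nat \<Rightarrow> nat \<Rightarrow> 'a" where
  "Er a b \<equiv> Eroot phi E F a b"

lemma Er_Suc_right [simp]: "Er k (Suc k) = E k"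
  and Er_Suc_left [simp]: "Er (Suc i) i = F i"
  by (simp_all add: Eroot_def)

lemma Er_upper_Suc: "k < l \<Longrightarrow> Er k (Suc l) = phi (inverse vv) * (E l * Er k l) - Er k l * E l"
  by (auto simp: Eroot_def Suc_diff_Suc mult.assoc dest!: less_imp_Suc_add)

lemma Er_lower_Suc: "i < j \<Longrightarrow> Er (Suc j) i = phi vv * (Er j i * F j) - F j * Er j i"
  by (auto simp: Eroot_def Suc_diff_Suc mult.assoc dest!: less_imp_Suc_add)

lemma K_E_qcommute: "1 \<le> a \<Longrightarrow> a \<le> n \<Longrightarrow> 1 \<le> b \<Longrightarrow> b < n \<Longrightarrow>
    qcommute (root_weight a b (Suc b)) (K a) (E b)"
  and K_F_qcommute: "1 \<le> a \<Longrightarrow> a \<le> n \<Longrightarrow> 1 \<le> b \<Longrightarrow> b < n \<Longrightarrow>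
    qcommute (root_weight a (Suc b) b) (K a) (F b)"
  by (simp_all add: qcommute_def K_E K_F flip: vpair_eq_root_weight inverse_vpair_eq_root_weight)

lemma K_Er_upper:
  assumes "1 \<le> a" "a \<le> n" "1 \<le> k" "k < l" "l \<le> n"
  shows "qcommute (root_weight a k l) (K a) (Er k l)"
proof -
  from \<open>k < l\<close> have "Suc k \<le> l" by simp
  then show ?thesis
  proof (induction l rule: dec_induct)
    case base
    show ?case using assms by (simp add: K_E_qcommute)
  next
    case (step m)
    then have "qcommute (root_weight a k m * root_weight a m (Suc m)) (K a)
        (phi (inverse vv) * (E m * Er k m) - Er k m * E m)"
      using assms by (intro qcommute_qbracket_right K_E_qcommute) auto
    with step show ?case by (simp add: Er_upper_Suc root_weight_mult)
  qed
qed

lemma K_Er_lower: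
  assumes "1 \<le> a" "a \<le> n" "1 \<le> i" "i < j" "j \<le> n"
  shows "qcommute (root_weight a j i) (K a) (Er j i)"
proof -
  from \<open>i < j\<close> have "Suc i \<le> j" by simp
  then show ?thesis
  proof (induction j rule: dec_induct)
    case base
    show ?case using assms by (simp add: K_F_qcommute)
  next
    case (step m)
    then have "qcommute (root_weight a (Suc m) m * root_weight a m i) (K a)
        (phi vv * (Er m i * F m) - F m * Er m i)"
      using assms by (intro qcommute_qbracket_right K_F_qcommute) auto
    with step show ?case by (simp add: Er_lower_Suc root_weight_mult)
  qed
qed

lemma K_Ki_Er:
  assumes "1 \<le> a" "a \<le> n" "1 \<le> b" "b \<le> n" "1 \<le> k" "k \<le> n" "1 \<le> l" "l \<le> n" "k \<noteq> l"
  shows "qcommute (root_weight a k l * inverse (root_weight b k l)) (K a * Ki b) (Er k l)"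
proof -
  have "qcommute (root_weight c k l) (K c) (Er k l)" if "1 \<le> c" "c \<le> n" for c
    using assms that K_Er_upper K_Er_lower by (metis linorder_neqE_nat)
  with assms show ?thesis
    by (intro qcommute_mult_left qcommute_inverse_left) (auto simp: K_Ki Ki_K)
qed

section \<open>Commutation relations between root vectors\<close>

lemma F_Er_upper_commute_outside:
  assumes "1 \<le> a" "a < n" "1 \<le> k" "k < l" "l \<le> n" "a < k \<or> l \<le> a"
  shows "F a * Er k l = Er k l * F a"
proof -
  from \<open>k < l\<close> have "Suc k \<le> l" by simp
  then show ?thesis
  proof (induction l rule: dec_induct)
    case base
    show ?case using assms E_F[of k a] by auto
  next
    case (step m)
    with assms E_F[of m a] have "F a * E m = E m * F a" by auto
    with step show ?case by (simp add: Er_upper_Suc commute_qbracket_right)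
  qed
qed

lemma E_Er_upper_commute:
  assumes "1 \<le> b" "b < n" "1 \<le> k" "k < l" "l \<le> n" "b + 1 < k \<or> l < b"
  shows "E b * Er k l = Er k l * E b"
proof -
  from \<open>k < l\<close> have "Suc k \<le> l" by simp
  then show ?thesis
  proof (induction l rule: dec_induct)
    case base
    show ?case using assms E_E[of b k] by auto
  next
    case (step m)
    with assms E_E[of b m] have "E b * E m = E m * E b" by auto
    with step show ?case by (simp add: Er_upper_Suc commute_qbracket_right)
  qed
qed

lemma E_Er_lower_commute:
  assumes "1 \<le> b" "b < n" "1 \<le> i" "i < j" "j \<le> n" "b < i \<or> j \<le> b"
  shows "E b * Er j i = Er j i * E b"
proof -
  from \<open>i < j\<close> have "Suc i \<le> j" by simp
  then show ?thesis
  proof (induction j rule: dec_induct)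
    case base
    show ?case using assms E_F[of b i] by auto
  next
    case (step m)
    with assms E_F[of b m] have "E b * F m = F m * E b" by auto
    with step show ?case by (simp add: Er_lower_Suc commute_qbracket_right)
  qed
qed

lemma F_Er_lower_commute:
  assumes "1 \<le> b" "b < n" "1 \<le> i" "i < j" "j \<le> n" "b + 1 < i \<or> j < b"
  shows "F b * Er j i = Er j i * F b"
proof -
  from \<open>i < j\<close> have "Suc i \<le> j" by simp
  then show ?thesis
  proof (induction j rule: dec_induct)
    case base
    show ?case using assms F_F[of b i] by auto
  next
    case (step m)
    with assms F_F[of b m] have "F b * F m = F m * F b" by auto
    with step show ?case by (simp add: Er_lower_Suc commute_qbracket_right)
  qed
qed

lemma Er_lower_Er_upper_commute:
  assumes "1 \<le> i" "i < j" "j \<le> k" "k < l" "l \<le> n"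
  shows "Er j i * Er k l = Er k l * Er j i"
proof -
  from \<open>i < j\<close> have "Suc i \<le> j" by simp
  then show ?thesis
  proof (induction j rule: dec_induct)
    case base
    show ?case using assms by (simp add: F_Er_upper_commute_outside)
  next
    case (step m)
    with assms F_Er_upper_commute_outside[of m k l] show ?case
      by (simp add: Er_lower_Suc commute_qbracket_left)
  qed
qed

lemma Er_upper_F_commutator_last:
  assumes "1 \<le> k" "k < m" "m < n"
  shows "Er k (Suc m) * F m - F m * Er k (Suc m) = - (phi (inverse vv) * (Er k m * (K m * Ki (Suc m))))"
proof -
  (* Naming the Cartan factors stops scalar_simps from reassociating them, so that their
     q-commutation rules stay applicable. *)
  define X where "X = Er k m"
  define P where "P = K m * Ki (Suc m)"
  define Q where "Q = K (Suc m) * Ki m"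
  have XF: "X * F m - F m * X = 0"
    using F_Er_upper_commute_outside[of m k m] assms unfolding X_def by simp
  have EF: "E m * F m - F m * E m = phi (inverse (vv - inverse vv)) * (P - Q)"
    using E_F_commutator[of m] assms unfolding P_def Q_def by simp
  have "qcommute (inverse vv) P X" "qcommute vv Q X"
    using K_Ki_Er[of m "Suc m" k m] K_Ki_Er[of "Suc m" m k m] assms
    unfolding P_def Q_def X_def by (simp_all add: root_weight_def)
  note PQ = this[THEN qcommuteD]
  have "Er k (Suc m) * F m - F m * Er k (Suc m)
      = phi (inverse vv) * ((E m * F m - F m * E m) * X + E m * (X * F m - F m * X))
        - ((X * F m - F m * X) * E m + X * (E m * F m - F m * E m))"
    using assms unfolding X_def by (simp only: Er_upper_Suc qbracket_commutator)
  also have "\<dots> = phi (inverse (vv - inverse vv)) * (phi (inverse vv) * (P * X - Q * X) - (X * P - X * Q))"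
    by (simp add: XF EF scalar_simps)
  also have "\<dots> = phi (inverse (vv - inverse vv) * (inverse vv * inverse vv - 1)) * (X * P)"
    by (simp add: PQ scalar_simps)
  finally show ?thesis
    unfolding inverse_vv_square_minus_1 X_def P_def by (simp add: phi_uminus)
qed

lemma F_Er_upper_commute:
  assumes "1 \<le> a" "a < n" "1 \<le> k" "k < l" "l \<le> n" "a \<noteq> k" "Suc a \<noteq> l"
  shows "F a * Er k l = Er k l * F a"
proof (cases "a < k \<or> l \<le> a")
  case True
  with assms show ?thesis by (simp add: F_Er_upper_commute_outside)
next
  case False
  with assms have "k < a" and l_ge: "Suc (Suc a) \<le> l" by auto
  from l_ge show ?thesis
  proof (induction l rule: dec_induct)
    case base
    define X where "X = Er k (Suc a)"
    define W where "W = Er k a"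
    define P where "P = K a * Ki (Suc a)"
    have EF: "E (Suc a) * F a - F a * E (Suc a) = 0"
      using E_F[of "Suc a" a] \<open>k < a\<close> l_ge assms by simp
    have XF: "X * F a - F a * X = - (phi (inverse vv) * (W * P))"
      using Er_upper_F_commutator_last[of k a] \<open>k < a\<close> assms unfolding X_def W_def P_def by simp
    have "qcommute (inverse vv) P (E (Suc a))"
      using K_Ki_Er[of a "Suc a" "Suc a" "Suc (Suc a)"] \<open>k < a\<close> l_ge assms
      unfolding P_def by (simp add: root_weight_def)
    note PE = qcommuteD[OF this]
    have "W * E (Suc a) = E (Suc a) * W"
      using E_Er_upper_commute[of "Suc a" k a] \<open>k < a\<close> l_ge assms unfolding W_def by simp
    note WE = commute_imp_left_commute[OF this]
    have "Er k (Suc (Suc a)) * F a - F a * Er k (Suc (Suc a))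
        = phi (inverse vv) * ((E (Suc a) * F a - F a * E (Suc a)) * X + E (Suc a) * (X * F a - F a * X))
          - ((X * F a - F a * X) * E (Suc a) + X * (E (Suc a) * F a - F a * E (Suc a)))"
      using \<open>k < a\<close> unfolding X_def by (simp only: Er_upper_Suc qbracket_commutator less_SucI)
    also have "\<dots> = 0"
      by (simp add: EF XF PE WE scalar_simps)
    finally show ?case by simp
  next
    case (step m)
    with assms E_F[of m a] have "F a * E m = E m * F a" by auto
    with step show ?case
      using \<open>k < a\<close> by (simp add: Er_upper_Suc commute_qbracket_right)
  qed
qed

lemma Er_upper_F_commutator_first:
  assumes "1 \<le> k" "Suc k < l" "l \<le> n"
  shows "Er k l * F k - F k * Er k l = Er (Suc k) l * (K (Suc k) * Ki k)"
proof -
  define Q where "Q = K (Suc k) * Ki k"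
  from \<open>Suc k < l\<close> have "Suc (Suc k) \<le> l" by simp
  then show ?thesis
  proof (induction l rule: dec_induct)
    case base
    define P where "P = K k * Ki (Suc k)"
    have EF: "E (Suc k) * F k - F k * E (Suc k) = 0"
      using E_F[of "Suc k" k] assms by simp
    have EF': "E k * F k - F k * E k = phi (inverse (vv - inverse vv)) * (P - Q)"
      using E_F_commutator[of k] assms unfolding P_def Q_def by simp
    have "qcommute (inverse vv) P (E (Suc k))" "qcommute vv Q (E (Suc k))"
      using K_Ki_Er[of k "Suc k" "Suc k" "Suc (Suc k)"] K_Ki_Er[of "Suc k" k "Suc k" "Suc (Suc k)"] assms
      unfolding P_def Q_def by (simp_all add: root_weight_def)
    note PQ = this[THEN qcommuteD]
    have "Er k (Suc (Suc k)) * F k - F k * Er k (Suc (Suc k))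
        = phi (inverse vv) * ((E (Suc k) * F k - F k * E (Suc k)) * E k + E (Suc k) * (E k * F k - F k * E k))
          - ((E k * F k - F k * E k) * E (Suc k) + E k * (E (Suc k) * F k - F k * E (Suc k)))"
      by (simp only: Er_upper_Suc[OF lessI] Er_Suc_right qbracket_commutator)
    also have "\<dots> = phi (inverse (vv - inverse vv) * (vv - inverse vv)) * (E (Suc k) * Q)"
      by (simp add: EF EF' PQ scalar_simps)
    finally show ?case
      unfolding Q_def by simp
  next
    case (step m)
    define W where "W = Er (Suc k) m"
    have EF: "E m * F k - F k * E m = 0"
      using E_F[of m k] step assms by simp
    have XF: "Er k m * F k - F k * Er k m = W * Q"
      using step.IH unfolding W_def Q_def .
    have "qcommute 1 Q (E m)"
      using K_Ki_Er[of "Suc k" k m "Suc m"] step assms unfolding Q_def by (simp add: root_weight_def)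
    note QE = qcommuteD[OF this]
    have "Er k (Suc m) * F k - F k * Er k (Suc m)
        = phi (inverse vv) * ((E m * F k - F k * E m) * Er k m + E m * (Er k m * F k - F k * Er k m))
          - ((Er k m * F k - F k * Er k m) * E m + Er k m * (E m * F k - F k * E m))"
      using step by (simp only: Er_upper_Suc qbracket_commutator Suc_lessD)
    also have "\<dots> = (phi (inverse vv) * (E m * W) - W * E m) * Q"
      by (simp add: EF XF QE scalar_simps)
    also have "\<dots> = Er (Suc k) (Suc m) * Q"
      using step unfolding W_def by (simp add: Er_upper_Suc)
    finally show ?case
      unfolding Q_def .
  qed
qed

text \<open>Reading \<open>E\<^sub>k\<^sub>,\<^sub>k\<close> as \<open>1 / (v - v\<^sup>-\<^sup>1)\<close> makes the cases \<open>i = k\<close> and \<open>i < k\<close>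
  of the commutator of \<open>E\<^sub>j\<^sub>,\<^sub>i\<close> with \<open>E\<^sub>k\<^sub>,\<^sub>l\<close> (\<open>k < j < l\<close>) one formula.\<close>

definition cross_factor :: "nat \<Rightarrow> nat \<Rightarrow> 'a" where
  "cross_factor i k = (if i = k then 1 else phi (vv - inverse vv) * Er k i)"

lemma F_cross_factor_commute:
  assumes "1 \<le> i" "i \<le> k" "k < b" "b < n"
  shows "F b * cross_factor i k = cross_factor i k * F b"
  using F_Er_lower_commute[of b i k] assms
  by (simp add: cross_factor_def phi_left_commute mult.assoc)

lemma Er_lower_Er_upper_commutator_first:
  assumes "1 \<le> i" "i \<le> k" "Suc k < l" "l \<le> n"
  shows "Er (Suc k) i * Er k l - Er k l * Er (Suc k) i
    = - (cross_factor i k * (Er (Suc k) l * (K (Suc k) * Ki k)))"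
proof (cases "i = k")
  case True
  with Er_upper_F_commutator_first[OF _ assms(3,4)] assms show ?thesis
    by (subst minus_diff_eq[symmetric]) (simp add: cross_factor_def)
next
  case False
  define X where "X = Er k l"
  define Y where "Y = Er k i"
  define W where "W = Er (Suc k) l"
  define Q where "Q = K (Suc k) * Ki k"
  from False assms have "i < k" by simp
  have YX: "Y * X - X * Y = 0"
    using Er_lower_Er_upper_commute[of i k k l] \<open>i < k\<close> assms unfolding X_def Y_def by simp
  have "X * F k - F k * X = W * Q"
    using Er_upper_F_commutator_first[of k l] \<open>i < k\<close> assms unfolding X_def W_def Q_def by simp
  then have FX: "F k * X - X * F k = - (W * Q)"
    by (subst minus_diff_eq[symmetric]) simp
  have "qcommute (inverse vv) Q Y"
    using K_Ki_Er[of "Suc k" k k i] \<open>i < k\<close> assms unfolding Q_def Y_def by (simp add: root_weight_def)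
  note QY = qcommuteD[OF this]
  have "W * Y = Y * W"
    using Er_lower_Er_upper_commute[of i k "Suc k" l] \<open>i < k\<close> assms unfolding W_def Y_def by simp
  note YW = commute_imp_left_commute[OF this]
  have "Er (Suc k) i * X - X * Er (Suc k) i
      = phi vv * ((Y * X - X * Y) * F k + Y * (F k * X - X * F k))
        - ((F k * X - X * F k) * Y + F k * (Y * X - X * Y))"
    using \<open>i < k\<close> unfolding Y_def by (simp only: Er_lower_Suc qbracket_commutator)
  also have "\<dots> = - (phi (vv - inverse vv) * (Y * (W * Q)))"
    by (simp add: YX FX QY YW scalar_simps)
  finally show ?thesis
    using False unfolding X_def Y_def W_def Q_def cross_factor_def by (simp add: mult.assoc)
qed

lemma Er_lower_Er_upper_commutator_inner:
  assumes "1 \<le> i" "i \<le> k" "k < j" "j < l" "l \<le> n"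
  shows "Er j i * Er k l - Er k l * Er j i = - (cross_factor i k * (Er j l * (K j * Ki k)))"
proof -
  define X where "X = Er k l"
  define Z where "Z = cross_factor i k"
  from \<open>k < j\<close> have "Suc k \<le> j" by simp
  then show ?thesis
  proof (induction j rule: dec_induct)
    case base
    show ?case
      using Er_lower_Er_upper_commutator_first[of i k l] assms unfolding X_def Z_def by simp
  next
    case (step m)
    define Y where "Y = Er m i"
    define W where "W = Er m l"
    define R where "R = K m * Ki k"
    have FX: "F m * X - X * F m = 0"
      using F_Er_upper_commute[of m k l] step assms unfolding X_def by simp
    have YX: "Y * X - X * Y = - (Z * (W * R))"
      using step.IH unfolding X_def Y_def Z_def W_def R_def .
    have "qcommute (inverse vv) R (F m)"
      using K_Ki_Er[of m k "Suc m" m] step assms unfolding R_def by (simp add: root_weight_def)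
    note RF = qcommuteD[OF this]
    have "F m * Z = Z * F m"
      using F_cross_factor_commute[of i k m] step assms unfolding Z_def by simp
    note ZF = commute_imp_left_commute[OF this]
    have "Er (Suc m) i * X - X * Er (Suc m) i
        = phi vv * ((Y * X - X * Y) * F m + Y * (F m * X - X * F m))
          - ((F m * X - X * F m) * Y + F m * (Y * X - X * Y))"
      using step assms unfolding Y_def by (simp only: Er_lower_Suc qbracket_commutator)
    also have "\<dots> = - (Z * ((W * F m - F m * W) * R))"
      by (simp add: FX YX RF ZF scalar_simps)
    also have "\<dots> = - (Z * (Er (Suc m) l * (K (Suc m) * Ki m * (K m * Ki k))))"
      using Er_upper_F_commutator_first[of m l] step assms unfolding W_def R_def
      by (simp add: mult.assoc)
    also have "\<dots> = - (Z * (Er (Suc m) l * (K (Suc m) * Ki k)))"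
      using Ki_K_cancel[of m] step assms by simp
    finally show ?case
      unfolding X_def Z_def .
  qed
qed

lemma Er_lower_Er_upper_commutator_diag_first:
  assumes "1 \<le> i" "i \<le> k" "k < n"
  shows "Er (Suc k) i * E k - E k * Er (Suc k) i =
    (if i = k then phi (inverse (vv - inverse vv)) * (K (Suc k) * Ki k - K k * Ki (Suc k))
     else Er k i * (K (Suc k) * Ki k))"
proof (cases "i = k")
  case True
  with E_F_commutator[of k] assms show ?thesis
    by (simp add: scalar_simps)
next
  case False
  define Y where "Y = Er k i"
  define P where "P = K k * Ki (Suc k)"
  define Q where "Q = K (Suc k) * Ki k"
  from False assms have "i < k" by simp
  have YE: "Y * E k - E k * Y = 0"
    using E_Er_lower_commute[of k i k] \<open>i < k\<close> assms unfolding Y_def by simp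
  have FE: "F k * E k - E k * F k = - (phi (inverse (vv - inverse vv)) * (P - Q))"
    using E_F_commutator[of k] \<open>i < k\<close> assms unfolding P_def Q_def
    by (subst minus_diff_eq[symmetric]) simp
  have "qcommute vv P Y" "qcommute (inverse vv) Q Y"
    using K_Ki_Er[of k "Suc k" k i] K_Ki_Er[of "Suc k" k k i] \<open>i < k\<close> assms
    unfolding P_def Q_def Y_def by (simp_all add: root_weight_def)
  note PQ = this[THEN qcommuteD]
  have "Er (Suc k) i * E k - E k * Er (Suc k) i
      = phi vv * ((Y * E k - E k * Y) * F k + Y * (F k * E k - E k * F k))
        - ((F k * E k - E k * F k) * Y + F k * (Y * E k - E k * Y))"
    using \<open>i < k\<close> unfolding Y_def by (simp only: Er_lower_Suc qbracket_commutator)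
  also have "\<dots> = phi (inverse (vv - inverse vv) * (vv - inverse vv)) * (Y * Q)"
    by (simp add: YE FE PQ scalar_simps)
  finally show ?thesis
    using False unfolding Y_def Q_def by simp
qed

lemma Er_lower_Er_upper_commutator_diag_Suc:
  assumes "1 \<le> i" "i \<le> k" "k < l" "l < n"
  shows "Er (Suc l) i * Er k (Suc l) - Er k (Suc l) * Er (Suc l) i
    = - (cross_factor i k * (phi (inverse (vv - inverse vv))
           * ((K l * Ki (Suc l) - K (Suc l) * Ki l) * (K l * Ki k))))
      + (Er l i * Er k l - Er k l * Er l i) * (K l * Ki (Suc l))"
proof -
  define X where "X = Er k (Suc l)"
  define Y where "Y = Er l i"
  define Z where "Z = cross_factor i k"
  define P where "P = K l * Ki (Suc l)"
  define Q where "Q = K (Suc l) * Ki l"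
  define R where "R = K l * Ki k"
  have YX: "Y * X - X * Y = - (Z * (E l * R))"
    using Er_lower_Er_upper_commutator_inner[of i k l "Suc l"] assms
    unfolding X_def Y_def Z_def R_def by simp
  have "Er k (Suc l) * F l - F l * Er k (Suc l) = - (phi (inverse vv) * (Er k l * P))"
    using Er_upper_F_commutator_last[of k l] assms unfolding P_def by simp
  then have FX: "F l * X - X * F l = phi (inverse vv) * (Er k l * P)"
    unfolding X_def by (subst minus_diff_eq[symmetric]) simp
  have EF: "E l * F l - F l * E l = phi (inverse (vv - inverse vv)) * (P - Q)"
    using E_F_commutator[of l] assms unfolding P_def Q_def by simp
  have "qcommute (inverse vv) R (F l)" "qcommute vv P Y"
    using K_Ki_Er[of l k "Suc l" l] K_Ki_Er[of l "Suc l" l i] assms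
    unfolding R_def P_def Y_def by (simp_all add: root_weight_def)
  note RP = this[THEN qcommuteD]
  have "F l * Z = Z * F l"
    using F_cross_factor_commute[of i k l] assms unfolding Z_def by simp
  note ZF = commute_imp_left_commute[OF this]
  have "Er (Suc l) i * X - X * Er (Suc l) i
      = phi vv * ((Y * X - X * Y) * F l + Y * (F l * X - X * F l))
        - ((F l * X - X * F l) * Y + F l * (Y * X - X * Y))"
    using assms unfolding Y_def by (simp only: Er_lower_Suc qbracket_commutator)
  also have "\<dots> = - (Z * ((E l * F l - F l * E l) * R)) + (Y * Er k l - Er k l * Y) * P"
    by (simp add: YX FX RP ZF scalar_simps)
  also have "\<dots> = - (Z * (phi (inverse (vv - inverse vv)) * ((P - Q) * R))) + (Y * Er k l - Er k l * Y) * P"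
    by (simp only: EF mult.assoc phi_left_commute)
  finally show ?thesis
    unfolding X_def Y_def Z_def P_def Q_def R_def .
qed

lemma Er_lower_Er_upper_commutator_diag:
  assumes "1 \<le> i" "i \<le> k" "k < l" "l \<le> n"
  shows "Er l i * Er k l - Er k l * Er l i =
    (if i = k then phi (inverse (vv - inverse vv)) * (K l * Ki k - K k * Ki l)
     else Er k i * (K l * Ki k))"
proof -
  from \<open>k < l\<close> have "Suc k \<le> l" by simp
  then show ?thesis
  proof (induction l rule: dec_induct)
    case base
    show ?case
      using Er_lower_Er_upper_commutator_diag_first[of i k] assms by simp
  next
    case (step m)
    define P where "P = K m * Ki (Suc m)"
    define Q where "Q = K (Suc m) * Ki m"
    define R where "R = K m * Ki k"
    have RP: "R * P = P * R"
      using K_Ki_mult_commute[of m k m "Suc m"] step assms unfolding P_def R_def by simp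
    have QR: "Q * R = K (Suc m) * Ki k" and KP: "K k * Ki m * P = K k * Ki (Suc m)"
      using Ki_K_cancel[of m] step assms unfolding P_def Q_def R_def by simp_all
    have "Er (Suc m) i * Er k (Suc m) - Er k (Suc m) * Er (Suc m) i
        = - (cross_factor i k * (phi (inverse (vv - inverse vv)) * ((P - Q) * R)))
          + (Er m i * Er k m - Er k m * Er m i) * P"
      using Er_lower_Er_upper_commutator_diag_Suc[of i k m] step assms
      unfolding P_def Q_def R_def by simp
    also have "\<dots> = - (cross_factor i k * (phi (inverse (vv - inverse vv)) * ((P - Q) * R)))
        + (if i = k then phi (inverse (vv - inverse vv)) * (R - K k * Ki m) else Er k i * R) * P"
      unfolding step.IH R_def ..
    also have "\<dots> = (if i = k then phi (inverse (vv - inverse vv)) * (Q * R - K k * Ki m * P)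
        else Er k i * (Q * R))"
    proof (cases "i = k")
      case True
      with RP show ?thesis
        by (simp add: cross_factor_def scalar_simps)
    next
      case False
      have "cross_factor i k * (phi (inverse (vv - inverse vv)) * T) = Er k i * T" for T
        using False by (simp add: cross_factor_def mult.assoc phi_left_commute phi_mult_left)
      with False RP show ?thesis
        by (simp add: scalar_simps)
    qed
    finally show ?case
      unfolding QR KP .
  qed
qed

lemma Er_lower_Er_upper_commute_nested:
  assumes "1 \<le> i" "i < k" "k < l" "l < j" "j \<le> n"
  shows "Er j i * Er k l = Er k l * Er j i"
proof -
  define X where "X = Er k l"
  have FX: "F m * X = X * F m" if "l \<le> m" "m < n" for m
    using F_Er_upper_commute[of m k l] assms that unfolding X_def by simp
  from \<open>l < j\<close> have "Suc l \<le> j" by simp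
  then show ?thesis
  proof (induction j rule: dec_induct)
    case base
    define Y where "Y = Er l i"
    define R where "R = K l * Ki k"
    have YX: "Y * X - X * Y = Er k i * R"
      using Er_lower_Er_upper_commutator_diag[of i k l] assms unfolding X_def Y_def R_def by simp
    have "qcommute (inverse vv) R (F l)"
      using K_Ki_Er[of l k "Suc l" l] assms unfolding R_def by (simp add: root_weight_def)
    note RF = qcommuteD[OF this]
    have "F l * Er k i = Er k i * F l"
      using F_Er_lower_commute[of l i k] assms by simp
    note FY = commute_imp_left_commute[OF this]
    have "Er (Suc l) i * X - X * Er (Suc l) i
        = phi vv * ((Y * X - X * Y) * F l + Y * (F l * X - X * F l))
          - ((F l * X - X * F l) * Y + F l * (Y * X - X * Y))"
      using assms unfolding Y_def by (simp only: Er_lower_Suc qbracket_commutator)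
    also have "\<dots> = 0"
      using FX[of l] assms by (simp add: YX RF FY scalar_simps)
    finally show ?case
      unfolding X_def by simp
  next
    case (step m)
    with assms FX[of m] show ?case
      unfolding X_def by (simp add: Er_lower_Suc commute_qbracket_left)
  qed
qed

end

theorem lemma2p9:
  fixes n i j k l :: nat
    and phi :: "Qv \<Rightarrow> 'a::ring_1"
    and K Ki Kb E Eb F Fb :: "nat \<Rightarrow> 'a"
  assumes alg: "Qv_algebra_hom phi"
    and rels: "qq_rels n phi K Ki Kb E Eb F Fb"
    and idx: "1 \<le> i" "1 \<le> j" "1 \<le> k" "1 \<le> l" "i \<le> n" "j \<le> n" "k \<le> n" "l \<le> n"
    and ord: "i < j" "k < l" "i \<le> k"
  shows
   "((i < j \<and> j \<le> k \<and> k < l) \<or> (i < k \<and> k < l \<and> l < j) \<longrightarrow>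
       Eroot phi E F j i * Eroot phi E F k l = Eroot phi E F k l * Eroot phi E F j i) \<and>
    (i = k \<and> k < j \<and> j < l \<longrightarrow>
       Eroot phi E F j i * Eroot phi E F k l =
         Eroot phi E F k l * Eroot phi E F j i - Eroot phi E F j l * K j * Ki i) \<and>
    (i < k \<and> k < j \<and> j = l \<longrightarrow>
       Eroot phi E F j i * Eroot phi E F k l =
         Eroot phi E F k l * Eroot phi E F j i + Eroot phi E F k i * K j * Ki k) \<and>
    (i < k \<and> k < j \<and> j < l \<longrightarrow>
       Eroot phi E F j i * Eroot phi E F k l =
         Eroot phi E F k l * Eroot phi E F j i
         - phi (vv - inverse vv) * Eroot phi E F k i * Eroot phi E F j l * K j * Ki k) \<and>
    (i = k \<and> j = l \<longrightarrow>
       Eroot phi E F j i * Eroot phi E F k l =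
         Eroot phi E F k l * Eroot phi E F j i
         + phi (inverse (vv - inverse vv)) * (K j * Ki i - K i * Ki j))"
proof -
  interpret quantum_gl_relations phi n K Ki E F
    using qq_rels_quantum_gl_relations[OF alg rels] .
  show ?thesis
  proof (intro conjI impI)
    assume "(i < j \<and> j \<le> k \<and> k < l) \<or> (i < k \<and> k < l \<and> l < j)"
    with idx ord show "Er j i * Er k l = Er k l * Er j i"
      using Er_lower_Er_upper_commute Er_lower_Er_upper_commute_nested by blast
  next
    assume "i = k \<and> k < j \<and> j < l"
    with Er_lower_Er_upper_commutator_inner[of i k j l] idx
    show "Er j i * Er k l = Er k l * Er j i - Er j l * K j * Ki i"
      by (simp add: cross_factor_def mult.assoc diff_eq_eq)
  next
    assume "i < k \<and> k < j \<and> j = l"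
    with Er_lower_Er_upper_commutator_diag[of i k l] idx
    show "Er j i * Er k l = Er k l * Er j i + Er k i * K j * Ki k"
      by (simp add: mult.assoc diff_eq_eq add.commute)
  next
    assume "i < k \<and> k < j \<and> j < l"
    with Er_lower_Er_upper_commutator_inner[of i k j l] idx
    show "Er j i * Er k l = Er k l * Er j i - phi (vv - inverse vv) * Er k i * Er j l * K j * Ki k"
      by (simp add: cross_factor_def mult.assoc diff_eq_eq)
  next
    assume "i = k \<and> j = l"
    with Er_lower_Er_upper_commutator_diag[of i k l] idx ord
    show "Er j i * Er k l = Er k l * Er j i + phi (inverse (vv - inverse vv)) * (K j * Ki i - K i * Ki j)"
      by (simp add: diff_eq_eq add.commute)
  qed
qed

end
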